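(* If degree sequences $e$ and $d$ satisfy $e\preccurlyeq d$ in the Rao order, then $\Delta_{m(e)}(e)\le \Delta_{m(d)}(d)$.
   Context: Degree sequences (of finite simple graphs with at least one vertex) are listed in nonincreasing order. For such $d$, $m(d)=\max\{i : d_i\ge i-1\}$ and, for integers $k\ge 0$, $\Delta_k(d)=k(k-1)+\sum_{i>k}\min\{k,d_i\}-\sum_{i\le k}d_i$. Rao order: $e\preccurlyeq d$ if there exist a realization $H$ of $e$ and a realization $G$ of $d$ such that $H$ is an induced subgraph of $G$. *)

theory Defs
  imports Main
begin

definition simple_graph :: "nat \<Rightarrow> (nat \<Rightarrow> nat \<Rightarrow> bool) \<Rightarrow> bool" where
  "simple_graph n E \<longleftrightarrow> (\<forall>i<n. \<forall>j<n. E i j = E j i) \<and> (\<forall>i<n. \<not> E i i)"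

definition vdeg :: "nat \<Rightarrow> (nat \<Rightarrow> nat \<Rightarrow> bool) \<Rightarrow> nat \<Rightarrow> nat" where
  "vdeg n E i = card {j. j < n \<and> E i j}"

definition realizes :: "(nat \<Rightarrow> nat \<Rightarrow> bool) \<Rightarrow> nat list \<Rightarrow> bool" where
  "realizes E d \<longleftrightarrow> simple_graph (length d) E \<and> (\<forall>i<length d. vdeg (length d) E i = d ! i)"

definition degree_sequence :: "nat list \<Rightarrow> bool" where
  "degree_sequence d \<longleftrightarrow> d \<noteq> [] \<and> sorted_wrt (\<ge>) d \<and> (\<exists>E. realizes E d)"

definition rao_le :: "nat list \<Rightarrow> nat list \<Rightarrow> bool" where
  "rao_le e d \<longleftrightarrow> (\<exists>H G f. realizes H e \<and> realizes G d \<and>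
      inj_on f {0..<length e} \<and> f ` {0..<length e} \<subseteq> {0..<length d} \<and>
      (\<forall>i<length e. \<forall>j<length e. H i j = G (f i) (f j)))"

text \<open>1-based indexing: d_i = d ! (i - 1).\<close>
definition mval :: "nat list \<Rightarrow> nat" where
  "mval d = Max {i \<in> {1..length d}. d ! (i - 1) \<ge> i - 1}"

definition Delta :: "nat \<Rightarrow> nat list \<Rightarrow> int" where
  "Delta k d = int (k * (k - 1)) + (\<Sum>i\<in>{k<..length d}. int (min k (d ! (i - 1))))
              - (\<Sum>i\<in>{1..k}. int (d ! (i - 1)))"

end

theory Submission imports Defs begin

text \<open>For a realization G of d on the vertex set V and any A \<subseteq> V, the number
  |A|(|A| - 1) - (sum of d over A) + (sum of d over V - A) counts, with multiplicity two, the
  non-edges inside A plus the edges inside V - A, i.e. how far G is from being a split graph with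
  clique A and independent set V - A. Passing to an induced subgraph (and restricting A) can only
  lower this count. For a nonincreasing sequence the value at a set of size k is smallest for the
  first k indices, and over these prefixes it is smallest at k = m(d), where it equals
  \<Delta>_m(d)(d). Comparing e with the preimage of the first m(d) vertices of G gives the theorem.\<close>

definition adj_count :: "(nat \<Rightarrow> nat \<Rightarrow> bool) \<Rightarrow> nat set \<Rightarrow> nat \<Rightarrow> nat" where
  "adj_count G S v = card {j \<in> S. G v j}"

definition nonadj_count :: "(nat \<Rightarrow> nat \<Rightarrow> bool) \<Rightarrow> nat set \<Rightarrow> nat \<Rightarrow> nat" where
  "nonadj_count G S v = card {j \<in> S. j \<noteq> v \<and> \<not> G v j}"

definition split_defect :: "(nat \<Rightarrow> nat \<Rightarrow> bool) \<Rightarrow> nat \<Rightarrow> nat set \<Rightarrow> nat" where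
  "split_defect G n A = (\<Sum>v\<in>A. nonadj_count G A v) + (\<Sum>v\<in>{0..<n} - A. adj_count G ({0..<n} - A) v)"

definition split_value :: "nat list \<Rightarrow> nat set \<Rightarrow> int" where
  "split_value d A = int (card A * (card A - 1)) - (\<Sum>v\<in>A. int (d ! v))
     + (\<Sum>v\<in>{0..<length d} - A. int (d ! v))"

lemma sum_adj_count_swap:
  assumes "finite A" "finite B" "\<And>x y. x \<in> A \<Longrightarrow> y \<in> B \<Longrightarrow> G x y = G y x"
  shows "(\<Sum>v\<in>A. adj_count G B v) = (\<Sum>v\<in>B. adj_count G A v)"
proof -
  have "(\<Sum>v\<in>A. adj_count G B v) = card (SIGMA v:A. {j \<in> B. G v j})"
    using assms by (simp add: adj_count_def)
  also have "\<dots> = card ((\<lambda>(x, y). (y, x)) ` (SIGMA v:B. {j \<in> A. G v j}))"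
    using assms(3) by (intro arg_cong[where f = card]) (auto simp: image_def)
  also have "\<dots> = card (SIGMA v:B. {j \<in> A. G v j})"
    by (rule card_image) (auto simp: inj_on_def)
  also have "\<dots> = (\<Sum>v\<in>B. adj_count G A v)"
    using assms by (simp add: adj_count_def)
  finally show ?thesis .
qed

lemma realizes_nth_eq_adj_count:
  assumes "realizes G d" "A \<subseteq> {0..<length d}" "v < length d"
  shows "d ! v = adj_count G A v + adj_count G ({0..<length d} - A) v"
proof -
  have "d ! v = card {j. j < length d \<and> G v j}"
    using assms by (simp add: realizes_def vdeg_def)
  also have "{j. j < length d \<and> G v j} = {j \<in> A. G v j} \<union> {j \<in> {0..<length d} - A. G v j}"
    using assms by auto
  also have "card \<dots> = adj_count G A v + adj_count G ({0..<length d} - A) v"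
    unfolding adj_count_def using assms(2) by (subst card_Un_disjoint) (auto intro: finite_subset)
  finally show ?thesis .
qed

lemma adj_count_add_nonadj_count:
  assumes "realizes G d" "A \<subseteq> {0..<length d}" "v \<in> A"
  shows "adj_count G A v + nonadj_count G A v = card A - 1"
proof -
  have fin_A: "finite A" using assms(2) by (rule finite_subset) simp
  have "\<not> G v v" using assms by (auto simp: realizes_def simple_graph_def)
  then have "A - {v} = {j \<in> A. G v j} \<union> {j \<in> A. j \<noteq> v \<and> \<not> G v j}"
    using assms(3) by auto
  then have "card (A - {v}) = adj_count G A v + nonadj_count G A v"
    unfolding adj_count_def nonadj_count_def using fin_A by (simp add: card_Un_disjoint disjoint_iff)
  then show ?thesis using assms(3) fin_A by simp
qed

lemma split_value_eq_split_defect: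
  assumes G: "realizes G d" and A: "A \<subseteq> {0..<length d}"
  shows "split_value d A = int (split_defect G (length d) A)"
proof -
  let ?B = "{0..<length d} - A"
  have "finite A" using A by (rule finite_subset) simp
  moreover have "\<And>x y. x \<in> A \<Longrightarrow> y \<in> ?B \<Longrightarrow> G x y = G y x"
    using assms by (auto simp: realizes_def simple_graph_def)
  ultimately have swap: "(\<Sum>v\<in>A. adj_count G ?B v) = (\<Sum>v\<in>?B. adj_count G A v)"
    by (intro sum_adj_count_swap) auto
  have in_A: "(\<Sum>v\<in>A. int (d ! v))
      = (\<Sum>v\<in>A. int (card A - 1) - int (nonadj_count G A v) + int (adj_count G ?B v))"
  proof (rule sum.cong)
    fix v assume v: "v \<in> A"
    then have "v < length d" using A by auto
    then show "int (d ! v) = int (card A - 1) - int (nonadj_count G A v) + int (adj_count G ?B v)"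
      using realizes_nth_eq_adj_count[OF G A] adj_count_add_nonadj_count[OF G A v] by force
  qed simp
  have in_B: "(\<Sum>v\<in>?B. int (d ! v)) = (\<Sum>v\<in>?B. int (adj_count G A v) + int (adj_count G ?B v))"
    using realizes_nth_eq_adj_count[OF G A] by (intro sum.cong) auto
  have "int (card A * (card A - 1)) = (\<Sum>v\<in>A. int (card A - 1))" by simp
  then show ?thesis
    unfolding split_value_def split_defect_def in_A in_B
      sum.distrib sum_subtractf of_nat_add of_nat_sum
    using arg_cong[OF swap, of int] by (simp add: of_nat_sum)
qed

lemma split_defect_induced_le:
  assumes H: "realizes H e" and G: "realizes G d" and inj: "inj_on f {0..<length e}"
    and sub: "f ` {0..<length e} \<subseteq> {0..<length d}"
    and ind: "\<forall>i<length e. \<forall>j<length e. H i j = G (f i) (f j)"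
    and A: "A \<subseteq> {0..<length d}"
  shows "split_defect H (length e) {i. i < length e \<and> f i \<in> A} \<le> split_defect G (length d) A"
proof -
  let ?A' = "{i. i < length e \<and> f i \<in> A}"
  let ?B' = "{0..<length e} - ?A'"
  let ?B = "{0..<length d} - A"
  have fin_A: "finite A" using A by (rule finite_subset) simp
  have inj_A': "inj_on f ?A'" and inj_B': "inj_on f ?B'"
    using inj by (rule inj_on_subset, auto)+
  have "(\<Sum>i\<in>?A'. nonadj_count H ?A' i) \<le> (\<Sum>i\<in>?A'. nonadj_count G A (f i))"
  proof (intro sum_mono)
    fix i assume i: "i \<in> ?A'"
    have "f ` {j \<in> ?A'. j \<noteq> i \<and> \<not> H i j} \<subseteq> {j \<in> A. j \<noteq> f i \<and> \<not> G (f i) j}"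
      using i ind inj by (auto simp: inj_on_def)
    moreover have "inj_on f {j \<in> ?A'. j \<noteq> i \<and> \<not> H i j}"
      using inj_A' by (rule inj_on_subset) auto
    ultimately show "nonadj_count H ?A' i \<le> nonadj_count G A (f i)"
      unfolding nonadj_count_def using fin_A by (intro card_inj_on_le) auto
  qed
  also have "\<dots> = (\<Sum>v\<in>f ` ?A'. nonadj_count G A v)" by (simp add: sum.reindex[OF inj_A'])
  also have "\<dots> \<le> (\<Sum>v\<in>A. nonadj_count G A v)" using fin_A by (intro sum_mono2) auto
  finally have inside: "(\<Sum>i\<in>?A'. nonadj_count H ?A' i) \<le> (\<Sum>v\<in>A. nonadj_count G A v)" .
  have "(\<Sum>i\<in>?B'. adj_count H ?B' i) \<le> (\<Sum>i\<in>?B'. adj_count G ?B (f i))"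
  proof (intro sum_mono)
    fix i assume i: "i \<in> ?B'"
    have "f ` {j \<in> ?B'. H i j} \<subseteq> {j \<in> ?B. G (f i) j}"
      using i ind sub by (auto simp: image_subset_iff)
    moreover have "inj_on f {j \<in> ?B'. H i j}" using inj_B' by (rule inj_on_subset) auto
    ultimately show "adj_count H ?B' i \<le> adj_count G ?B (f i)"
      unfolding adj_count_def by (intro card_inj_on_le) auto
  qed
  also have "\<dots> = (\<Sum>v\<in>f ` ?B'. adj_count G ?B v)" by (simp add: sum.reindex[OF inj_B'])
  also have "\<dots> \<le> (\<Sum>v\<in>?B. adj_count G ?B v)" using sub by (intro sum_mono2) auto
  finally have outside: "(\<Sum>i\<in>?B'. adj_count H ?B' i) \<le> (\<Sum>v\<in>?B. adj_count G ?B v)" .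
  show ?thesis unfolding split_defect_def using inside outside by simp
qed

lemma sorted_wrt_ge_nth_antimono:
  fixes xs :: "'a::order list"
  assumes "sorted_wrt (\<ge>) xs" "i \<le> j" "j < length xs"
  shows "xs ! j \<le> xs ! i"
proof (cases "i = j")
  case False
  with assms show ?thesis using sorted_wrt_nth_less[OF assms(1), of i j] by simp
qed simp

lemma sum_nth_le_sum_prefix:
  fixes xs :: "nat list"
  assumes sorted: "sorted_wrt (\<ge>) xs" and A: "A \<subseteq> {0..<length xs}"
  shows "(\<Sum>i\<in>A. xs ! i) \<le> (\<Sum>i<card A. xs ! i)"
proof -
  let ?K = "{..<card A}"
  have fin_A: "finite A" using A by (rule finite_subset) simp
  have "card (A \<inter> ?K) + card (A - ?K) = card (?K \<inter> A) + card (?K - A)"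
    using card_Int_Diff[OF fin_A, of ?K] card_Int_Diff[of ?K A] by simp
  then have same_card: "card (A - ?K) = card (?K - A)" by (simp add: Int_commute)
  \<comment> \<open>every index of A beyond the prefix carries a value at most c, every missed prefix index
      a value at least c\<close>
  define c where "c = (if card A < length xs then xs ! card A else 0)"
  have "(\<Sum>i\<in>A - ?K. xs ! i) \<le> (\<Sum>i\<in>A - ?K. c)"
    using A sorted_wrt_ge_nth_antimono[OF sorted, of "card A"] by (intro sum_mono) (auto simp: c_def)
  also have "\<dots> = (\<Sum>i\<in>?K - A. c)" using same_card by simp
  also have "\<dots> \<le> (\<Sum>i\<in>?K - A. xs ! i)"
    using sorted_wrt_ge_nth_antimono[OF sorted, of _ "card A"] by (intro sum_mono) (auto simp: c_def)
  finally have "(\<Sum>i\<in>A - ?K. xs ! i) \<le> (\<Sum>i\<in>?K - A. xs ! i)" .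
  moreover have "sum ((!) xs) A = sum ((!) xs) (A \<inter> ?K) + sum ((!) xs) (A - ?K)"
    by (rule sum.Int_Diff[OF fin_A])
  moreover have "sum ((!) xs) ?K = sum ((!) xs) (A \<inter> ?K) + sum ((!) xs) (?K - A)"
    by (metis Int_commute finite_lessThan sum.Int_Diff)
  ultimately show ?thesis by linarith
qed

lemma split_value_eq_total:
  assumes "A \<subseteq> {0..<length d}"
  shows "split_value d A
    = int (card A * (card A - 1)) + (\<Sum>v<length d. int (d ! v)) - 2 * (\<Sum>v\<in>A. int (d ! v))"
  using assms unfolding split_value_def by (simp add: sum_diff atLeast0LessThan)

lemma split_value_prefix_le:
  assumes "sorted_wrt (\<ge>) e" "A \<subseteq> {0..<length e}"
  shows "split_value e {0..<card A} \<le> split_value e A"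
proof -
  have "card A \<le> length e" using card_mono[OF _ assms(2)] by simp
  then have "{0..<card A} \<subseteq> {0..<length e}" by auto
  moreover have "(\<Sum>i\<in>A. int (e ! i)) \<le> (\<Sum>i<card A. int (e ! i))"
    using sum_nth_le_sum_prefix[OF assms] by (simp flip: of_nat_sum)
  ultimately show ?thesis
    unfolding split_value_eq_total[OF assms(2)] by (simp add: split_value_eq_total atLeast0LessThan)
qed

lemma split_value_prefix_Suc:
  assumes "k < length d"
  shows "split_value d {0..<Suc k} = split_value d {0..<k} + 2 * int k - 2 * int (d ! k)"
proof -
  have "{0..<length d} - {0..<k} = insert k ({0..<length d} - {0..<Suc k})" using assms by auto
  moreover have "int (Suc k * k) = int (k * (k - 1)) + 2 * int k" by (cases k) (auto simp: algebra_simps)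
  ultimately show ?thesis unfolding split_value_def by simp
qed

lemma mval_bounds:
  assumes "d \<noteq> []"
  shows "1 \<le> mval d" "mval d \<le> length d" "mval d - 1 \<le> d ! (mval d - 1)"
    and "mval d < length d \<Longrightarrow> d ! mval d < mval d"
proof -
  let ?S = "{i \<in> {1..length d}. d ! (i - 1) \<ge> i - 1}"
  have "finite ?S" by simp
  moreover have "1 \<in> ?S" using assms by (cases d) auto
  ultimately have "mval d \<in> ?S" unfolding mval_def by (intro Max_in) auto
  then show "1 \<le> mval d" "mval d \<le> length d" "mval d - 1 \<le> d ! (mval d - 1)" by auto
  assume "mval d < length d"
  show "d ! mval d < mval d"
  proof (rule ccontr)
    assume "\<not> d ! mval d < mval d"
    with \<open>mval d < length d\<close> have "Suc (mval d) \<in> ?S" by auto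
    then have "Suc (mval d) \<le> mval d" unfolding mval_def using Max_ge[OF \<open>finite ?S\<close>] by blast
    then show False by simp
  qed
qed

lemma split_value_prefix_mval_le:
  assumes ne: "d \<noteq> []" and sorted: "sorted_wrt (\<ge>) d" and k: "k \<le> length d"
  shows "split_value d {0..<mval d} \<le> split_value d {0..<k}"
proof (cases "mval d \<le> k")
  case True
  then show ?thesis
  proof (induction k rule: dec_induct)
    case (step x)
    with k have x: "x < length d" by simp
    have "d ! x \<le> d ! mval d" using step x sorted_wrt_ge_nth_antimono[OF sorted] by simp
    moreover have "d ! mval d < mval d" using mval_bounds(4)[OF ne] step x by simp
    ultimately show ?case using split_value_prefix_Suc[OF x] step by simp
  qed simp
next
  case False
  then have "k \<le> mval d" by simp
  then show ?thesis
  proof (induction k rule: inc_induct)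
    case (step x)
    have m: "1 \<le> mval d" "mval d \<le> length d" "mval d - 1 \<le> d ! (mval d - 1)"
      using mval_bounds[OF ne] by auto
    with step have x: "x < length d" by simp
    have "d ! (mval d - 1) \<le> d ! x"
      using step m sorted_wrt_ge_nth_antimono[OF sorted, of x "mval d - 1"] by simp
    then have "x \<le> d ! x" using m step by linarith
    then show ?case using split_value_prefix_Suc[OF x] step by simp
  qed simp
qed

lemma Delta_eq_split_value_prefix:
  assumes "k \<le> length d" and small: "\<And>i. k \<le> i \<Longrightarrow> i < length d \<Longrightarrow> d ! i \<le> k"
  shows "Delta k d = split_value d {0..<k}"
proof -
  have tail: "{k<..length d} = {Suc k..<Suc (length d)}" and head: "{1..k} = {Suc 0..<Suc k}"
    by auto
  have "(\<Sum>i\<in>{k<..length d}. int (min k (d ! (i - 1)))) = (\<Sum>i\<in>{k..<length d}. int (d ! i))"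
    unfolding tail sum.shift_bounds_Suc_ivl by (rule sum.cong) (auto dest: small)
  moreover have "{0..<length d} - {0..<k} = {k..<length d}" by auto
  ultimately show ?thesis
    unfolding Delta_def split_value_def head sum.shift_bounds_Suc_ivl by simp
qed

lemma Delta_mval_eq_split_value:
  assumes "d \<noteq> []" "sorted_wrt (\<ge>) d"
  shows "Delta (mval d) d = split_value d {0..<mval d}"
proof (rule Delta_eq_split_value_prefix)
  show "mval d \<le> length d" using mval_bounds(2)[OF assms(1)] .
  fix i assume "mval d \<le> i" "i < length d"
  then show "d ! i \<le> mval d"
    using mval_bounds(4)[OF assms(1)] sorted_wrt_ge_nth_antimono[OF assms(2)] by fastforce
qed

theorem theorem12:
  assumes "degree_sequence e" and "degree_sequence d" and "rao_le e d"
  shows "Delta (mval e) e \<le> Delta (mval d) d"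
proof -
  obtain H G f where H: "realizes H e" and G: "realizes G d" and inj: "inj_on f {0..<length e}"
    and sub: "f ` {0..<length e} \<subseteq> {0..<length d}"
    and ind: "\<forall>i<length e. \<forall>j<length e. H i j = G (f i) (f j)"
    using assms(3) unfolding rao_le_def by blast
  have e: "e \<noteq> []" "sorted_wrt (\<ge>) e" and d: "d \<noteq> []" "sorted_wrt (\<ge>) d"
    using assms(1,2) by (auto simp: degree_sequence_def)
  define A where "A = {0..<mval d}"
  define A' where "A' = {i. i < length e \<and> f i \<in> A}"
  have A: "A \<subseteq> {0..<length d}" using mval_bounds(2)[OF d(1)] by (auto simp: A_def)
  have A': "A' \<subseteq> {0..<length e}" by (auto simp: A'_def)
  have "Delta (mval e) e = split_value e {0..<mval e}" by (rule Delta_mval_eq_split_value[OF e])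
  also have "\<dots> \<le> split_value e {0..<card A'}"
    using card_mono[OF _ A'] by (intro split_value_prefix_mval_le[OF e]) auto
  also have "\<dots> \<le> split_value e A'" by (rule split_value_prefix_le[OF e(2) A'])
  also have "\<dots> = int (split_defect H (length e) A')" by (rule split_value_eq_split_defect[OF H A'])
  also have "\<dots> \<le> int (split_defect G (length d) A)"
    using split_defect_induced_le[OF H G inj sub ind A] by (simp add: A'_def)
  also have "\<dots> = split_value d A" by (rule split_value_eq_split_defect[OF G A, symmetric])
  also have "\<dots> = Delta (mval d) d" by (simp add: A_def Delta_mval_eq_split_value[OF d])
  finally show ?thesis .
qed

end
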